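(* Let $A=[a_{ij}]$ be a real $n\times n$ matrix with zero diagonal and $f(\sigma)=\sum_{p=1}^{n-1}\sum_{q=p+1}^n a_{\sigma(p)\sigma(q)}$ its LOP objective function on $\Sigma_n$. Let $k\ge0$, $l\ge1$ with $k+l\le n$, let $i_1,\dots,i_k,j_1,\dots,j_l\in\{1,\dots,n\}$ be pairwise distinct, and let $S_1=\{\sigma:\sigma(1)=i_1,\dots,\sigma(k)=i_k\}$, $S_2=\{\sigma:\sigma(n)=j_1,\sigma(n-1)=j_2,\dots,\sigma(n-l+1)=j_l\}$. Writing $I=\{i_1,\dots,i_k\}$, $J=\{j_1,\dots,j_l\}$ and $[n]=\{1,\dots,n\}$, $$\frac{1}{|S_1\cap S_2|}\sum_{\sigma\in S_1\cap S_2}f(\sigma)=\sum_{r=1}^{k}\ \sum_{j\in[n]\setminus\{i_1,\dots,i_r\}}a_{i_rj}+\sum_{s=1}^{l}\ \sum_{i\in[n]\setminus(I\cup\{j_1,\dots,j_{s-1}\})}a_{ij_s}+\frac12\sum_{i,j\in[n]\setminus(I\cup J)}a_{ij}.$$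
   Context: $\Sigma_n$ is the symmetric group on $\{1,\dots,n\}$; $\sigma(p)$ is the row/column index placed in position $p$. *)

theory Defs
  imports Complex_Main "HOL-Combinatorics.Permutations"
begin

definition lop_obj :: "nat \<Rightarrow> (nat \<Rightarrow> nat \<Rightarrow> real) \<Rightarrow> (nat \<Rightarrow> nat) \<Rightarrow> real" where
  "lop_obj n a \<sigma> = (\<Sum>p = 1..n-1. \<Sum>q = p+1..n. a (\<sigma> p) (\<sigma> q))"

end

theory Submission
  imports Defs
begin

(* For sigma fixing the first k and the last l positions, split the pairs p < q of positions into
   those with p <= k, those whose q is among the last l positions, and those inside the middle
   block {k+1..n-l}. The first two kinds contribute the same for every such sigma: the row of i_r
   meets exactly the values outside {i_1..i_r}, and the column of j_s exactly the values outside
   I and {j_1..j_s}, where the diagonal entry a(j_s, j_s) = 0 may be added back. Reversing the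
   middle block is an involution on these permutations which turns the middle pairs of sigma into
   their transposes; with the zero diagonal, the middle contributions of sigma and of its reversal
   add up to the full sum of a over the complement of I and J, and averaging gives half of it. *)

lemma sum_add_involution:
  fixes h :: "'a \<Rightarrow> 'b::comm_semiring_1"
  assumes "\<And>x. x \<in> S \<Longrightarrow> \<tau> x \<in> S" "\<And>x. x \<in> S \<Longrightarrow> \<tau> (\<tau> x) = x"
    and "\<And>x. x \<in> S \<Longrightarrow> h x + h (\<tau> x) = c"
  shows "2 * sum h S = of_nat (card S) * c"
proof -
  have "sum h S = sum (h \<circ> \<tau>) S"
    by (rule sum.reindex_bij_witness[where i = \<tau> and j = \<tau>]) (use assms in auto)
  then have "2 * sum h S = (\<Sum>x\<in>S. h x + h (\<tau> x))"
    by (simp add: mult_2 sum.distrib)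
  also have "\<dots> = of_nat (card S) * c"
    using assms(3) by simp
  finally show ?thesis .
qed

lemma permutes_extending_inj_on:
  assumes "finite A" "X \<subseteq> A" "inj_on f X" "f ` X \<subseteq> A"
  obtains \<sigma> where "\<sigma> permutes A" "\<And>x. x \<in> X \<Longrightarrow> \<sigma> x = f x"
proof -
  have "card (A - X) = card (A - f ` X)"
    using assms by (simp add: card_Diff_subset card_image finite_subset)
  then obtain h where h: "bij_betw h (A - X) (A - f ` X)"
    using finite_same_card_bij[of "A - X" "A - f ` X"] assms(1) by auto
  define \<sigma> where "\<sigma> x = (if x \<in> X then f x else if x \<in> A then h x else x)" for x
  have "bij_betw \<sigma> X (f ` X)"
    using assms(3) unfolding bij_betw_def inj_on_def \<sigma>_def by auto
  moreover have "bij_betw \<sigma> (A - X) (A - f ` X)"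
    using h by (rule bij_betw_cong[THEN iffD1, rotated]) (simp add: \<sigma>_def)
  ultimately have "bij_betw \<sigma> (X \<union> (A - X)) (f ` X \<union> (A - f ` X))"
    by (rule bij_betw_combine) blast
  then have "bij_betw \<sigma> A A"
    using assms(2,4) by (simp add: Un_absorb1 Un_absorb2)
  then have "\<sigma> permutes A"
    by (rule bij_imp_permutes) (use assms(2) in \<open>auto simp: \<sigma>_def\<close>)
  then show thesis
    using that by (simp add: \<sigma>_def)
qed

lemma sum_permutes_Diff:
  assumes "\<sigma> permutes A"
  shows "(\<Sum>x\<in>A - B. g (\<sigma> x)) = (\<Sum>y\<in>A - \<sigma> ` B. g y)"
proof -
  have "\<sigma> ` (A - B) = A - \<sigma> ` B"
    using assms by (simp add: image_set_diff permutes_inj permutes_image)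
  then show ?thesis
    using sum.reindex[of \<sigma> "A - B" g] permutes_inj[OF assms] by (simp add: inj_on_subset)
qed

lemma sum_upper_triangle_Suc:
  fixes u m :: nat
  shows "(\<Sum>p = u..Suc m. \<Sum>q = p+1..Suc m. b p q)
     = (\<Sum>p = u..m. \<Sum>q = p+1..m. b p q) + (\<Sum>p = u..m. b p (Suc m))"
proof (cases "u \<le> Suc m")
  case True
  have "(\<Sum>p = u..Suc m. \<Sum>q = p+1..Suc m. b p q) = (\<Sum>p = u..m. \<Sum>q = p+1..Suc m. b p q)"
    using True by (simp add: sum.last_plus)
  also have "\<dots> = (\<Sum>p = u..m. (\<Sum>q = p+1..m. b p q) + b p (Suc m))"
    by (intro sum.cong) (auto simp: sum.last_plus)
  finally show ?thesis
    by (simp add: sum.distrib)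
qed simp

lemma sum_upper_triangle_split:
  fixes k l n :: nat
  assumes "k + l \<le> n"
  shows "(\<Sum>p = 1..n-1. \<Sum>q = p+1..n. b p q)
       = (\<Sum>r = 1..k. \<Sum>q = r+1..n. b r q) + (\<Sum>s = 1..l. \<Sum>p = k+1..n-s. b p (n+1-s))
         + (\<Sum>p = k+1..n-l. \<Sum>q = p+1..n-l. b p q)"
  using assms
proof (induction l)
  case 0
  have "(\<Sum>p = 1..n-1. \<Sum>q = p+1..n. b p q) = (\<Sum>p = 1..n. \<Sum>q = p+1..n. b p q)"
    by (cases n) (simp_all add: sum.last_plus)
  also have "\<dots> = (\<Sum>r = 1..k. \<Sum>q = r+1..n. b r q) + (\<Sum>p = k+1..n. \<Sum>q = p+1..n. b p q)"
    using sum.ub_add_nat[of 1 k _ "n - k"] 0 by simp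
  finally show ?case
    by simp
next
  case (Suc l)
  define m where "m = n - Suc l"
  have m: "n - l = Suc m" "n + 1 - Suc l = Suc m"
    using Suc.prems by (auto simp: m_def)
  have "(\<Sum>p = k+1..n-l. \<Sum>q = p+1..n-l. b p q)
      = (\<Sum>p = k+1..m. \<Sum>q = p+1..m. b p q) + (\<Sum>p = k+1..m. b p (n + 1 - Suc l))"
    unfolding m by (rule sum_upper_triangle_Suc)
  then show ?case
    using Suc by (simp add: m_def add_ac)
qed

lemma sum_upper_triangle_add_reflected:
  fixes u v :: nat
  assumes "\<And>p. p \<in> {u..v} \<Longrightarrow> g p p = 0"
  shows "(\<Sum>p = u..v. \<Sum>q = p+1..v. g p q)
         + (\<Sum>p = u..v. \<Sum>q = p+1..v. g (u+v-p) (u+v-q))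
       = (\<Sum>p = u..v. \<Sum>q = u..v. g p q)"
proof -
  define upper where "upper = Sigma {u..v} (\<lambda>p. {p+1..v})"
  define lower where "lower = {(p, q). u \<le> q \<and> q < p \<and> p \<le> v}"
  have fin: "finite upper" "finite lower" "finite ({u..v} \<times> {u..v})"
    by (auto simp: upper_def lower_def intro: finite_subset[of _ "{u..v} \<times> {u..v}"])
  have "(\<Sum>p = u..v. \<Sum>q = p+1..v. g (u+v-p) (u+v-q))
      = (\<Sum>(p, q)\<in>upper. g (u+v-p) (u+v-q))"
    by (simp add: sum.Sigma upper_def)
  also have "\<dots> = sum (case_prod g) lower"
    by (rule sum.reindex_bij_witness[where i = "\<lambda>(p, q). (u+v-p, u+v-q)"
          and j = "\<lambda>(p, q). (u+v-p, u+v-q)"]) (auto simp: upper_def lower_def)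
  moreover have "(\<Sum>p = u..v. \<Sum>q = p+1..v. g p q) = sum (case_prod g) upper"
    by (simp add: sum.Sigma upper_def)
  moreover have "sum (case_prod g) upper + sum (case_prod g) lower
      = sum (case_prod g) (upper \<union> lower)"
    by (rule sum.union_disjoint[symmetric]) (use fin in \<open>auto simp: upper_def lower_def\<close>)
  moreover have "\<dots> = sum (case_prod g) ({u..v} \<times> {u..v})"
    by (rule sum.mono_neutral_left) (use assms fin in \<open>auto simp: upper_def lower_def\<close>,
        metis le_neq_implies_less not_less_eq_eq)
  ultimately show ?thesis
    by (simp add: sum.cartesian_product)
qed

lemma bij_betw_reflect_nat:
  fixes n s :: nat
  assumes "s \<le> n"
  shows "bij_betw (\<lambda>t. n + 1 - t) {n+1-s..n} {1..s}"
  by (rule bij_betw_byWitness[where f' = "\<lambda>t. n + 1 - t"]) (use assms in auto)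

locale fixed_ends =
  fixes n k l :: nat and ii jj :: "nat \<Rightarrow> nat"
  assumes ends_fit: "k + l \<le> n"
    and ii_range: "ii ` {1..k} \<subseteq> {1..n}" and jj_range: "jj ` {1..l} \<subseteq> {1..n}"
    and ii_inj: "inj_on ii {1..k}" and jj_inj: "inj_on jj {1..l}"
    and ii_jj_disjoint: "ii ` {1..k} \<inter> jj ` {1..l} = {}"
begin

definition perms :: "(nat \<Rightarrow> nat) set" where
  "perms = {\<sigma>. \<sigma> permutes {1..n} \<and> (\<forall>r\<in>{1..k}. \<sigma> r = ii r)
                 \<and> (\<forall>s\<in>{1..l}. \<sigma> (n + 1 - s) = jj s)}"

definition middle :: "nat set" where
  "middle = {1..n} - (ii ` {1..k} \<union> jj ` {1..l})"

lemma finite_perms: "finite perms"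
  by (rule finite_subset[OF _ finite_permutations[of "{1..n}"]]) (auto simp: perms_def)

lemma perms_nonempty: "perms \<noteq> {}"
proof -
  define f where "f x = (if x \<le> k then ii x else jj (n + 1 - x))" for x
  have "bij_betw f {1..k} (ii ` {1..k})"
    using inj_on_imp_bij_betw[OF ii_inj]
    by (rule bij_betw_cong[THEN iffD1, rotated]) (simp add: f_def)
  moreover have "bij_betw f {n+1-l..n} (jj ` {1..l})"
    using bij_betw_trans[OF bij_betw_reflect_nat[OF add_leD2[OF ends_fit]]
        inj_on_imp_bij_betw[OF jj_inj]]
    by (rule bij_betw_cong[THEN iffD1, rotated]) (use ends_fit in \<open>auto simp: f_def\<close>)
  ultimately have "bij_betw f ({1..k} \<union> {n+1-l..n}) (ii ` {1..k} \<union> jj ` {1..l})"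
    using ii_jj_disjoint by (rule bij_betw_combine)
  then have "inj_on f ({1..k} \<union> {n+1-l..n})" "f ` ({1..k} \<union> {n+1-l..n}) \<subseteq> {1..n}"
    using ii_range jj_range by (auto simp: bij_betw_def)
  moreover have "{1..k} \<union> {n+1-l..n} \<subseteq> {1..n}"
    using ends_fit by auto
  ultimately obtain \<sigma> where
    \<sigma>: "\<sigma> permutes {1..n}" "\<And>x. x \<in> {1..k} \<union> {n+1-l..n} \<Longrightarrow> \<sigma> x = f x"
    by (metis finite_atLeastAtMost permutes_extending_inj_on)
  have "\<sigma> (n + 1 - s) = jj s" if "s \<in> {1..l}" for s
  proof -
    have "n + 1 - s \<in> {n+1-l..n}" "\<not> n + 1 - s \<le> k" "n + 1 - (n + 1 - s) = s"
      using that ends_fit by auto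
    then show ?thesis
      using \<sigma>(2)[of "n + 1 - s"] by (simp add: f_def)
  qed
  then have "\<sigma> \<in> perms"
    using \<sigma> by (auto simp: perms_def f_def)
  then show ?thesis
    by blast
qed

lemma perms_suffix:
  assumes "\<sigma> \<in> perms" "y \<in> {n+1-l..n}"
  shows "\<sigma> y = jj (n + 1 - y)"
proof -
  have pos: "n + 1 - y \<in> {1..l}" "n + 1 - (n + 1 - y) = y"
    using assms(2) ends_fit by auto
  have "\<forall>s\<in>{1..l}. \<sigma> (n + 1 - s) = jj s"
    using assms(1) by (simp add: perms_def)
  then show ?thesis
    using pos by force
qed

lemma perms_image_prefix:
  assumes "\<sigma> \<in> perms" "r \<le> k"
  shows "\<sigma> ` {1..r} = ii ` {1..r}"
  using assms by (auto simp: perms_def)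

lemma perms_image_suffix:
  assumes "\<sigma> \<in> perms" "s \<le> l"
  shows "\<sigma> ` {n+1-s..n} = jj ` {1..s}"
proof -
  have "\<sigma> ` {n+1-s..n} = jj ` (\<lambda>t. n + 1 - t) ` {n+1-s..n}"
    using assms perms_suffix by (auto simp: image_comp intro!: image_cong)
  also have "(\<lambda>t. n + 1 - t) ` {n+1-s..n} = {1..s}"
    using bij_betw_reflect_nat[of s n] assms ends_fit by (simp add: bij_betw_def)
  finally show ?thesis .
qed

lemma perms_image_middle:
  assumes "\<sigma> \<in> perms"
  shows "\<sigma> ` {k+1..n-l} = middle"
proof -
  have perm: "\<sigma> permutes {1..n}"
    using assms by (simp add: perms_def)
  have "{k+1..n-l} = {1..n} - ({1..k} \<union> {n+1-l..n})"
    using ends_fit by auto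
  then have "\<sigma> ` {k+1..n-l} = {1..n} - (\<sigma> ` {1..k} \<union> \<sigma> ` {n+1-l..n})"
    using perm by (simp add: image_set_diff permutes_inj permutes_image image_Un)
  then show ?thesis
    using perms_image_prefix perms_image_suffix assms by (simp add: middle_def)
qed

lemma prefix_row_sum:
  assumes "\<sigma> \<in> perms" "r \<in> {1..k}"
  shows "(\<Sum>q = r+1..n. a (\<sigma> r) (\<sigma> q)) = (\<Sum>j \<in> {1..n} - ii ` {1..r}. a (ii r) j)"
proof -
  have "{r+1..n} = {1..n} - {1..r}"
    by auto
  then show ?thesis
    using assms perms_image_prefix[of \<sigma> r]
      sum_permutes_Diff[where A = "{1..n}" and B = "{1..r}" and g = "a (ii r)"]
    by (simp add: perms_def)
qed

lemma suffix_column_sum: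
  assumes diag: "\<forall>i\<in>{1..n}. a i i = 0" and "\<sigma> \<in> perms" "s \<in> {1..l}"
  shows "(\<Sum>p = k+1..n-s. a (\<sigma> p) (\<sigma> (n+1-s)))
       = (\<Sum>i \<in> {1..n} - (ii ` {1..k} \<union> jj ` {1..<s}). a i (jj s))"
proof -
  have js: "\<sigma> (n+1-s) = jj s" "jj s \<in> {1..n}" "Suc (n-s) = n+1-s"
    using assms(2,3) jj_range ends_fit by (auto simp: perms_def image_subset_iff)
  have "(\<Sum>p = k+1..n-s. a (\<sigma> p) (jj s)) = (\<Sum>p = k+1..Suc (n-s). a (\<sigma> p) (jj s))"
    using js diag assms(3) ends_fit by (subst sum.cl_ivl_Suc) simp
  also have "{k+1..Suc (n-s)} = {1..n} - ({1..k} \<union> {n+1-(s-1)..n})"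
    using assms(3) ends_fit by auto
  also have "\<sigma> ` ({1..k} \<union> {n+1-(s-1)..n}) = ii ` {1..k} \<union> jj ` {1..<s}"
  proof -
    have "{1..<s} = {1..s-1}" "s - 1 \<le> l"
      using assms(3) by auto
    then show ?thesis
      using perms_image_prefix[OF assms(2) order_refl] perms_image_suffix[OF assms(2)]
      by (simp add: image_Un)
  qed
  then have "(\<Sum>p \<in> {1..n} - ({1..k} \<union> {n+1-(s-1)..n}). a (\<sigma> p) (jj s))
      = (\<Sum>i \<in> {1..n} - (ii ` {1..k} \<union> jj ` {1..<s}). a i (jj s))"
    using sum_permutes_Diff[where A = "{1..n}" and g = "\<lambda>i. a i (jj s)"] assms(2)
    by (simp add: perms_def)
  finally show ?thesis
    using js by simp
qed

definition middle_obj :: "(nat \<Rightarrow> nat \<Rightarrow> real) \<Rightarrow> (nat \<Rightarrow> nat) \<Rightarrow> real" where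
  "middle_obj a \<sigma> = (\<Sum>p = k+1..n-l. \<Sum>q = p+1..n-l. a (\<sigma> p) (\<sigma> q))"

lemma lop_obj_perms:
  assumes diag: "\<forall>i\<in>{1..n}. a i i = 0" and "\<sigma> \<in> perms"
  shows "lop_obj n a \<sigma>
       = (\<Sum>r = 1..k. \<Sum>j \<in> {1..n} - ii ` {1..r}. a (ii r) j)
       + (\<Sum>s = 1..l. \<Sum>i \<in> {1..n} - (ii ` {1..k} \<union> jj ` {1..<s}). a i (jj s))
       + middle_obj a \<sigma>"
proof -
  have "(\<Sum>r = 1..k. \<Sum>q = r+1..n. a (\<sigma> r) (\<sigma> q))
      = (\<Sum>r = 1..k. \<Sum>j \<in> {1..n} - ii ` {1..r}. a (ii r) j)"
    by (rule sum.cong[OF refl]) (rule prefix_row_sum[OF assms(2)])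
  moreover have "(\<Sum>s = 1..l. \<Sum>p = k+1..n-s. a (\<sigma> p) (\<sigma> (n+1-s)))
      = (\<Sum>s = 1..l. \<Sum>i \<in> {1..n} - (ii ` {1..k} \<union> jj ` {1..<s}). a i (jj s))"
    by (rule sum.cong[OF refl]) (rule suffix_column_sum[of a, OF diag assms(2)])
  ultimately show ?thesis
    unfolding lop_obj_def middle_obj_def sum_upper_triangle_split[OF ends_fit] by simp
qed

definition flip_middle :: "nat \<Rightarrow> nat" where
  "flip_middle p = (if p \<in> {k+1..n-l} then (k+1) + (n-l) - p else p)"

lemma flip_middle_involution: "flip_middle \<circ> flip_middle = id"
  by (rule ext) (auto simp: flip_middle_def)

lemma comp_flip_middle_in_perms:
  assumes "\<sigma> \<in> perms"
  shows "\<sigma> \<circ> flip_middle \<in> perms"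
proof -
  have "flip_middle permutes {1..n}"
  proof (rule bij_imp_permutes)
    show "bij_betw flip_middle {1..n} {1..n}"
      by (rule bij_betw_byWitness[where f' = flip_middle])
        (use ends_fit in \<open>auto simp: flip_middle_def\<close>)
  qed (use ends_fit in \<open>auto simp: flip_middle_def\<close>)
  moreover have "flip_middle r = r" if "r \<in> {1..k}" for r
    using that by (simp add: flip_middle_def)
  moreover have "flip_middle (n + 1 - s) = n + 1 - s" if "s \<in> {1..l}" for s
    using that ends_fit by (auto simp: flip_middle_def)
  ultimately show ?thesis
    using assms by (auto simp: perms_def permutes_compose)
qed

lemma middle_obj_add_flip:
  assumes diag: "\<forall>i\<in>{1..n}. a i i = 0" and "\<sigma> \<in> perms"
  shows "middle_obj a \<sigma> + middle_obj a (\<sigma> \<circ> flip_middle) = (\<Sum>i\<in>middle. \<Sum>j\<in>middle. a i j)"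
proof -
  let ?P = "{k+1..n-l}"
  have perm: "\<sigma> permutes {1..n}"
    using assms(2) by (simp add: perms_def)
  have "middle_obj a (\<sigma> \<circ> flip_middle)
      = (\<Sum>p\<in>?P. \<Sum>q = p+1..n-l. a (\<sigma> ((k+1) + (n-l) - p)) (\<sigma> ((k+1) + (n-l) - q)))"
    unfolding middle_obj_def by (intro sum.cong) (auto simp: flip_middle_def)
  moreover have "a (\<sigma> p) (\<sigma> p) = 0" if "p \<in> ?P" for p
    using that diag permutes_in_image[OF perm] ends_fit by auto
  ultimately have "middle_obj a \<sigma> + middle_obj a (\<sigma> \<circ> flip_middle)
      = (\<Sum>p\<in>?P. \<Sum>q\<in>?P. a (\<sigma> p) (\<sigma> q))"
    using sum_upper_triangle_add_reflected[where u = "k+1" and v = "n-l"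
        and g = "\<lambda>p q. a (\<sigma> p) (\<sigma> q)"]
    unfolding middle_obj_def by simp
  also have "\<dots> = (\<Sum>i\<in>\<sigma> ` ?P. \<Sum>j\<in>\<sigma> ` ?P. a i j)"
    using inj_on_subset[OF permutes_inj[OF perm]] by (simp add: sum.reindex)
  also have "\<dots> = (\<Sum>i\<in>middle. \<Sum>j\<in>middle. a i j)"
    using perms_image_middle[OF assms(2)] by simp
  finally show ?thesis .
qed

end

theorem proposition7:
  fixes n k l :: nat and a :: "nat \<Rightarrow> nat \<Rightarrow> real" and ii jj :: "nat \<Rightarrow> nat"
  assumes diag: "\<forall>i\<in>{1..n}. a i i = 0"
    and l: "l \<ge> 1" and kl: "k + l \<le> n"
    and ii_range: "ii ` {1..k} \<subseteq> {1..n}" and jj_range: "jj ` {1..l} \<subseteq> {1..n}"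
    and ii_inj: "inj_on ii {1..k}" and jj_inj: "inj_on jj {1..l}"
    and disj: "ii ` {1..k} \<inter> jj ` {1..l} = {}"
  defines "S \<equiv> {\<sigma>. \<sigma> permutes {1..n} \<and> (\<forall>r\<in>{1..k}. \<sigma> r = ii r)
                     \<and> (\<forall>s\<in>{1..l}. \<sigma> (n + 1 - s) = jj s)}"
    and "I \<equiv> ii ` {1..k}" and "J \<equiv> jj ` {1..l}"
  shows "(\<Sum>\<sigma>\<in>S. lop_obj n a \<sigma>) / real (card S)
       = (\<Sum>r = 1..k. \<Sum>j \<in> {1..n} - ii ` {1..r}. a (ii r) j)
       + (\<Sum>s = 1..l. \<Sum>i \<in> {1..n} - (I \<union> jj ` {1..<s}). a i (jj s))
       + (1/2) * (\<Sum>i \<in> {1..n} - (I \<union> J). \<Sum>j \<in> {1..n} - (I \<union> J). a i j)"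
proof -
  interpret fixed_ends n k l ii jj
    using kl ii_range jj_range ii_inj jj_inj disj by unfold_locales
  have S: "S = perms"
    by (simp add: S_def perms_def)
  define C where "C = (\<Sum>r = 1..k. \<Sum>j \<in> {1..n} - ii ` {1..r}. a (ii r) j)
    + (\<Sum>s = 1..l. \<Sum>i \<in> {1..n} - (I \<union> jj ` {1..<s}). a i (jj s))"
  have "(\<Sum>\<sigma>\<in>S. lop_obj n a \<sigma>) = (\<Sum>\<sigma>\<in>S. C + middle_obj a \<sigma>)"
    using lop_obj_perms[of a, OF diag] by (simp add: S C_def I_def)
  also have "\<dots> = real (card S) * C + (\<Sum>\<sigma>\<in>S. middle_obj a \<sigma>)"
    by (simp add: sum.distrib)
  finally have sum_obj:
    "(\<Sum>\<sigma>\<in>S. lop_obj n a \<sigma>) = real (card S) * C + (\<Sum>\<sigma>\<in>S. middle_obj a \<sigma>)" .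
  have "2 * (\<Sum>\<sigma>\<in>S. middle_obj a \<sigma>) = real (card S) * (\<Sum>i\<in>middle. \<Sum>j\<in>middle. a i j)"
    by (rule sum_add_involution[where \<tau> = "\<lambda>\<sigma>. \<sigma> \<circ> flip_middle"])
      (simp_all add: S comp_flip_middle_in_perms middle_obj_add_flip[of a, OF diag]
        comp_assoc flip_middle_involution)
  moreover have "real (card S) > 0"
    using finite_perms perms_nonempty by (simp add: S card_gt_0_iff)
  ultimately show ?thesis
    using sum_obj by (simp add: C_def middle_def I_def J_def field_simps)
qed

end
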